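(* Let $n\in\mathbb{N}$ and let $M_n(x):=\frac{1}{(n-1)!}\sum_{j=0}^{n}(-1)^j\binom{n}{j}\left(\frac n2+x-j\right)_+^{n-1}$ be the B-spline of order $n$, where $(x)_+=\max\{x,0\}$. Let $(g_w)_{w>0}$ be functions $g_w:\mathbb{R}\to\mathbb{R}$ with $g_w(u)\to u$ uniformly on $\mathbb{R}$ as $w\to\infty$, $g_w(0)=0$ for all $w$, $|g_w(u)-g_w(v)|\le\psi(|u-v|)$ for all $u,v$, $w>0$ and some $\varphi$-function $\psi$, and $\sup_{u\ne0}|g_w(u)/u-1|=\mathcal{O}(w^{-\theta_0})$ as $w\to\infty$ for some $\theta_0>0$. Define $$(S_w^{M_n}f)(x):=\sum_{k\in\mathbb{Z}}M_n(wx-k)\,g_w\!\left(w\int_{k/w}^{(k+1)/w}f(u)\,du\right).$$ Let $\varphi$ be a convex $\varphi$-function satisfying condition (H) (relative to $\psi$) with a convex $\varphi$-function $\eta$, and let $f\in L^{\varphi+\eta}(\mathbb{R})$. Then for every $0<\alpha<1$ there exist constants $\mu>0$, $\lambda_0>0$ and $\lambda>0$ such that, with $\omega(f,\delta')_\eta:=\sup_{|t|\le\delta'}I^{\eta}[\lambda(f(\cdot+t)-f(\cdot))]$, for sufficiently large $w>0$, $$I^{\varphi}[\mu(S_w^{M_n}f-f)]\le\frac13\,\omega(f,1/w^{\alpha})_\eta+\frac13\,\omega(f,1/w)_\eta+\frac{I^{\varphi}[\lambda_0f]}{3}\,w^{-\theta_0}.$$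
   Context: A $\varphi$-function is a continuous non-decreasing $\varphi:[0,\infty)\to[0,\infty)$ with $\varphi(0)=0$, $\varphi(u)>0$ for $u>0$, $\varphi(u)\to+\infty$ as $u\to\infty$. $I^{\varphi}[f]:=\int_{\mathbb{R}}\varphi(|f(x)|)\,dx$; $L^{\varphi}(\mathbb{R})=\{f\text{ measurable}: I^{\varphi}[\lambda f]<\infty\text{ for some }\lambda>0\}$; $L^{\varphi+\eta}(\mathbb{R})$ is the Orlicz space generated by $\varphi+\eta$. Condition (H): there is a $\varphi$-function $\eta$ such that for every $\lambda\in(0,1)$ there exists $C_\lambda\in(0,1)$ with $\varphi(C_\lambda\psi(u))\le\eta(\lambda u)$ for all $u\ge0$. The operator $S_w^{M_n}f$ is considered for locally integrable $f$ for which the series converges at every $x$. *)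

theory Defs
  imports "HOL-Analysis.Analysis"
begin

definition phi_function :: "(real \<Rightarrow> real) \<Rightarrow> bool" where
  "phi_function \<phi> \<longleftrightarrow>
     continuous_on {0..} \<phi> \<and> mono_on {0..} \<phi> \<and> \<phi> 0 = 0 \<and>
     (\<forall>u>0. \<phi> u > 0) \<and> filterlim \<phi> at_top at_top"

definition modular :: "(real \<Rightarrow> real) \<Rightarrow> (real \<Rightarrow> real) \<Rightarrow> ennreal" where
  "modular \<phi> f = (\<integral>\<^sup>+ x. ennreal (\<phi> \<bar>f x\<bar>) \<partial>lebesgue)"

definition orlicz :: "(real \<Rightarrow> real) \<Rightarrow> (real \<Rightarrow> real) set" where
  "orlicz \<phi> = {f. f \<in> borel_measurable lebesgue \<and>
                  (\<exists>c>0. modular \<phi> (\<lambda>x. c * f x) < \<infinity>)}"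

definition condH :: "(real \<Rightarrow> real) \<Rightarrow> (real \<Rightarrow> real) \<Rightarrow> (real \<Rightarrow> real) \<Rightarrow> bool" where
  "condH \<phi> \<psi> \<eta> \<longleftrightarrow> phi_function \<eta> \<and>
     (\<forall>l. 0 < l \<and> l < 1 \<longrightarrow>
        (\<exists>C. 0 < C \<and> C < 1 \<and> (\<forall>u\<ge>0. \<phi> (C * \<psi> u) \<le> \<eta> (l * u))))"

text \<open>Truncated power (x)_+^k, with the convention (x)_+^0 = 1 if x > 0 and 0 otherwise.\<close>
definition plus_pow :: "real \<Rightarrow> nat \<Rightarrow> real" where
  "plus_pow x k = (if x > 0 then x ^ k else 0)"

definition bspline :: "nat \<Rightarrow> real \<Rightarrow> real" where
  "bspline n x = (1 / fact (n - 1)) *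
     (\<Sum>j = 0..n. (-1) ^ j * real (n choose j) * plus_pow (real n / 2 + x - real j) (n - 1))"

definition S_op :: "nat \<Rightarrow> (real \<Rightarrow> real \<Rightarrow> real) \<Rightarrow> real \<Rightarrow> (real \<Rightarrow> real) \<Rightarrow> real \<Rightarrow> real" where
  "S_op n g w f x = (\<Sum>\<^sub>\<infinity>k::int. bspline n (w * x - real_of_int k) *
       g w (w * (LINT u:{real_of_int k / w .. (real_of_int k + 1) / w}|lebesgue. f u)))"

definition modulus :: "(real \<Rightarrow> real) \<Rightarrow> real \<Rightarrow> (real \<Rightarrow> real) \<Rightarrow> real \<Rightarrow> ennreal" where
  "modulus \<eta> l f \<delta> = (SUP t\<in>{t. \<bar>t\<bar> \<le> \<delta>}. modular \<eta> (\<lambda>x. l * (f (x + t) - f x)))"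

end

theory Submission
  imports Defs "HOL-Probability.Probability_Measure"
begin

text \<open>
  Only the \<open>n + 1\<close> nodes \<open>k\<close> with \<open>\<bar>w x - k\<bar> \<le> n/2\<close> contribute to \<open>S\<^sub>w f (x)\<close>; the
  B-spline values there are bounded and sum to \<open>1\<close>.  Hence \<open>S\<^sub>w f (x) - f (x)\<close> is a bounded
  combination of the differences \<open>g\<^sub>w (A\<^sub>k) - g\<^sub>w (f x)\<close>, where \<open>A\<^sub>k\<close> is the mean of \<open>f\<close> over
  \<open>[k/w, (k+1)/w]\<close>, plus the error \<open>g\<^sub>w (f x) - f x\<close>; convexity of \<open>\<phi>\<close> separates the two.
  In the first part the \<open>\<psi>\<close>-Lipschitz bound and condition (H) replace \<open>\<phi>\<close> by \<open>\<eta>\<close> with an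
  arbitrarily small factor, and Jensen's inequality bounds \<open>\<eta> (l \<bar>A\<^sub>k - f x\<bar>)\<close> by \<open>w\<close> times the
  integral of \<open>\<eta> (l \<bar>f (x + t) - f x\<bar>)\<close> over \<open>\<bar>t\<bar> \<le> R/w\<close>.  Integrating in \<open>x\<close> and exchanging the
  integrals gives a multiple of the modulus of smoothness at \<open>R/w \<le> w powr -\<alpha>\<close>.  The second part is at most
  \<open>C w powr -\<theta>\<^sub>0 \<bar>f x\<bar>\<close> by the rate hypothesis on \<open>g\<^sub>w\<close>.
\<close>

section \<open>B-splines\<close>

lemma alternating_choose_sum_Suc:
  fixes p :: "nat \<Rightarrow> 'a::comm_ring_1"
  shows "(\<Sum>j\<le>Suc N. (-1)^j * of_nat (Suc N choose j) * p j)
       = (\<Sum>j\<le>N. (-1)^j * of_nat (N choose j) * (p j - p (Suc j)))"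
proof -
  have "(\<Sum>j\<le>Suc N. (-1)^j * of_nat (Suc N choose j) * p j)
      = p 0 + (\<Sum>j\<le>N. (-1)^(Suc j) * of_nat (Suc N choose Suc j) * p (Suc j))"
    by (subst sum.atMost_Suc_shift) simp
  also have "(\<Sum>j\<le>N. (-1)^(Suc j) * of_nat (Suc N choose Suc j) * p (Suc j))
      = - (\<Sum>j\<le>N. (-1)^j * of_nat (N choose j) * p (Suc j))
        - (\<Sum>j\<le>N. (-1)^j * of_nat (N choose Suc j) * p (Suc j))"
    by (simp add: sum_negf[symmetric] sum_subtractf[symmetric] algebra_simps)
  also have "p 0 = (\<Sum>j\<le>N. (-1)^j * of_nat (N choose j) * p j)
      + (\<Sum>j\<le>N. (-1)^j * of_nat (N choose Suc j) * p (Suc j))"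
  proof -
    have "(\<Sum>j\<le>N. (-1)^j * of_nat (N choose j) * p j) = (\<Sum>j\<le>Suc N. (-1)^j * of_nat (N choose j) * p j)"
      by (simp add: binomial_eq_0)
    also have "\<dots> = p 0 - (\<Sum>j\<le>N. (-1)^j * of_nat (N choose Suc j) * p (Suc j))"
      by (subst sum.atMost_Suc_shift) (simp add: sum_negf[symmetric] del: sum.atMost_Suc)
    finally show ?thesis by simp
  qed
  finally show ?thesis
    by (simp add: sum_subtractf right_diff_distrib)
qed

lemma power_sub_power_minus_one:
  fixes x :: "'a::comm_ring_1"
  shows "x ^ m - (x - 1) ^ m = - (\<Sum>r<m. of_nat (m choose r) * (-1)^(m-r) * x^r)"
proof -
  have "(x - 1) ^ m = (\<Sum>r\<le>m. of_nat (m choose r) * x^r * (-1)^(m-r))"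
    using binomial_ring[of x "-1" m] by simp
  also have "\<dots> = (\<Sum>r<m. of_nat (m choose r) * (-1)^(m-r) * x^r) + x ^ m"
    by (simp add: lessThan_Suc_atMost[symmetric] mult_ac)
  finally show ?thesis
    by simp
qed

lemma alternating_choose_power_sum:
  fixes c :: "'a::{comm_ring_1,ring_char_0}"
  assumes "m \<le> N"
  shows "(\<Sum>i\<le>N. (-1)^i * of_nat (N choose i) * (c - of_nat i)^m) = (if m = N then fact N else 0)"
  using assms
proof (induction N arbitrary: m)
  case 0
  then show ?case by simp
next
  case (Suc N)
  have "(\<Sum>i\<le>Suc N. (-1)^i * of_nat (Suc N choose i) * (c - of_nat i)^m)
      = (\<Sum>i\<le>N. (-1)^i * of_nat (N choose i) * ((c - of_nat i)^m - (c - of_nat (Suc i))^m))"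
    by (rule alternating_choose_sum_Suc)
  also have "\<dots> = (\<Sum>i\<le>N. (-1)^i * of_nat (N choose i) *
        (- (\<Sum>r<m. of_nat (m choose r) * (-1)^(m-r) * (c - of_nat i)^r)))"
  proof (intro sum.cong refl)
    fix i
    have "c - of_nat (Suc i) = (c - of_nat i) - 1"
      by simp
    then show "(-1)^i * of_nat (N choose i) * ((c - of_nat i)^m - (c - of_nat (Suc i))^m)
       = (-1)^i * of_nat (N choose i) * (- (\<Sum>r<m. of_nat (m choose r) * (-1)^(m-r) * (c - of_nat i)^r))"
      by (simp only: power_sub_power_minus_one)
  qed
  also have "\<dots> = - (\<Sum>r<m. of_nat (m choose r) * (-1)^(m-r) *
          (\<Sum>i\<le>N. (-1)^i * of_nat (N choose i) * (c - of_nat i)^r))"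
    by (simp add: sum_distrib_left sum_negf[symmetric] sum.swap[of _ "{..<m}"] algebra_simps)
  also have "\<dots> = - (\<Sum>r<m. of_nat (m choose r) * (-1)^(m-r) * (if r = N then fact N else 0))"
    using Suc.prems by (intro arg_cong[where f=uminus] sum.cong refl) (simp add: Suc.IH)
  also have "\<dots> = (if m = Suc N then fact (Suc N) else 0)"
  proof (cases "m = Suc N")
    case True
    then have "(\<Sum>r<m. of_nat (m choose r) * (-1)^(m-r) * (if r = N then fact N else 0))
        = of_nat (m choose N) * (-1)^(m-N) * (fact N :: 'a)"
      by (subst sum.remove[of _ N]) auto
    with True show ?thesis by (simp add: algebra_simps)
  next
    case False
    with Suc.prems show ?thesis by (auto intro!: sum.neutral)
  qed
  finally show ?case .
qed

lemma bspline_altdef: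
  "bspline n x = (\<Sum>j\<le>n. (-1) ^ j * real (n choose j) * plus_pow (real n / 2 + x - real j) (n - 1))
                 / fact (n - 1)"
  unfolding bspline_def by (simp add: atLeast0AtMost)

lemma bspline_eq_0_left:
  assumes "x < - real n / 2"
  shows "bspline n x = 0"
  unfolding bspline_altdef plus_pow_def using assms by (auto intro!: sum.neutral)

lemma bspline_eq_0_right:
  assumes n: "n \<ge> 1" and x: "x > real n / 2"
  shows "bspline n x = 0"
proof -
  have "(\<Sum>j\<le>n. (-1) ^ j * real (n choose j) * plus_pow (real n / 2 + x - real j) (n - 1))
      = (\<Sum>j\<le>n. (-1) ^ j * real (n choose j) * ((real n / 2 + x) - real j) ^ (n - 1))"
    using x by (intro sum.cong refl) (simp add: plus_pow_def)
  also have "\<dots> = 0"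
    using n by (subst alternating_choose_power_sum) auto
  finally show ?thesis
    unfolding bspline_altdef by simp
qed

lemma abs_bspline_le:
  assumes n: "n \<ge> 1"
  shows "\<bar>bspline n x\<bar> \<le> 2 ^ n * real n ^ (n - 1)"
proof (cases "x \<le> real n / 2")
  case True
  have "\<bar>\<Sum>j\<le>n. (-1) ^ j * real (n choose j) * plus_pow (real n / 2 + x - real j) (n - 1)\<bar>
      \<le> (\<Sum>j\<le>n. real (n choose j) * real n ^ (n - 1))"
  proof (rule order_trans[OF sum_abs sum_mono])
    fix j
    have "\<bar>plus_pow (real n / 2 + x - real j) (n - 1)\<bar> \<le> real n ^ (n - 1)"
      unfolding plus_pow_def using True by (auto intro!: power_mono)
    then show "\<bar>(-1) ^ j * real (n choose j) * plus_pow (real n / 2 + x - real j) (n - 1)\<bar>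
        \<le> real (n choose j) * real n ^ (n - 1)"
      by (simp add: abs_mult mult_left_mono)
  qed
  also have "\<dots> = 2 ^ n * real n ^ (n - 1)"
    by (simp add: sum_distrib_right[symmetric] choose_row_sum[symmetric]
                  of_nat_sum[symmetric] del: of_nat_sum)
  also have "\<dots> \<le> 2 ^ n * real n ^ (n - 1) * fact (n - 1)"
    using mult_left_mono[OF fact_ge_1[of "n - 1"], of "2 ^ n * real n ^ (n - 1)"] by simp
  finally show ?thesis
    unfolding bspline_altdef by (simp add: divide_le_eq)
next
  case False
  then show ?thesis using bspline_eq_0_right[OF n] by simp
qed

definition spline_node :: "nat \<Rightarrow> real \<Rightarrow> nat \<Rightarrow> int" where
  "spline_node n y i = \<lceil>y - real n / 2\<rceil> + int i"

lemma spline_node_ge: "y - real n / 2 \<le> spline_node n y i"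
  unfolding spline_node_def by linarith

lemma spline_node_le:
  assumes "i \<le> n"
  shows "spline_node n y i \<le> y + real n / 2 + 1"
  unfolding spline_node_def using assms by linarith

lemma bspline_eq_0_off_nodes:
  assumes n: "n \<ge> 1" and k: "k \<notin> spline_node n y ` {..n}"
  shows "bspline n (y - real_of_int k) = 0"
proof -
  define k0 where "k0 = \<lceil>y - real n / 2\<rceil>"
  have "k < k0 \<or> k > k0 + int n"
  proof (rule ccontr)
    assume "\<not> (k < k0 \<or> k > k0 + int n)"
    then have "k = spline_node n y (nat (k - k0))" "nat (k - k0) \<in> {..n}"
      unfolding spline_node_def k0_def by auto
    with k show False by blast
  qed
  then show ?thesis
  proof
    assume "k < k0"
    then have "y - real_of_int k > real n / 2" unfolding k0_def by linarith
    then show ?thesis by (rule bspline_eq_0_right[OF n])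
  next
    assume "k > k0 + int n"
    then have "y - real_of_int k < - real n / 2" unfolding k0_def by linarith
    then show ?thesis by (rule bspline_eq_0_left)
  qed
qed

lemma sum_bspline_nodes:
  assumes n: "n \<ge> 1"
  shows "(\<Sum>i\<le>n. bspline n (y - spline_node n y i)) = 1"
proof -
  obtain N where N: "n = Suc N" using n by (cases n) auto
  define z where "z = y + real n / 2"
  define k0 where "k0 = real_of_int \<lceil>y - real n / 2\<rceil>"
  have k0: "z - real n \<le> k0" "k0 < z - real n + 1"
    unfolding k0_def z_def by linarith+
  define Q where "Q r k = (\<Sum>j\<le>r. (-1)^j * real (r choose j) * plus_pow (z - k - real j) N)" for r k
  have bspline_Q: "bspline n (y - spline_node n y i) = Q n (k0 + real i) / fact N" for i
    unfolding bspline_altdef Q_def k0_def z_def spline_node_def N by (simp add: algebra_simps)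
  have Q_Suc: "Q n k = Q N k - Q N (k + 1)" for k
    unfolding Q_def N
    by (subst alternating_choose_sum_Suc)
       (simp add: sum_subtractf right_diff_distrib diff_diff_eq add_ac del: sum.atMost_Suc)
  have "(\<Sum>i\<le>n. Q n (k0 + real i)) = (\<Sum>i\<le>n. Q N (k0 + real i) - Q N (k0 + real (Suc i)))"
    by (intro sum.cong refl) (simp add: Q_Suc add_ac)
  also have "\<dots> = Q N k0 - Q N (k0 + real (Suc n))"
    by (subst sum_telescope[where f="\<lambda>i. Q N (k0 + real i)"]) simp
  also have "Q N (k0 + real (Suc n)) = 0"
    unfolding Q_def plus_pow_def using k0 by (auto intro!: sum.neutral)
  also have "Q N k0 = (\<Sum>j\<le>N. (-1)^j * real (N choose j) * ((z - k0) - real j) ^ N)"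
    unfolding Q_def plus_pow_def using k0 N by (intro sum.cong refl) auto
  also have "\<dots> = fact N"
    by (subst alternating_choose_power_sum) auto
  finally show ?thesis
    unfolding bspline_Q sum_divide_distrib[symmetric] by simp
qed

definition cell_mean :: "real \<Rightarrow> (real \<Rightarrow> real) \<Rightarrow> int \<Rightarrow> real" where
  "cell_mean w f k = w * (LINT u:{real_of_int k / w .. (real_of_int k + 1) / w}|lebesgue. f u)"

lemma S_op_eq_sum_nodes:
  assumes n: "n \<ge> 1"
  shows "S_op n g w f x = (\<Sum>i\<le>n. bspline n (w * x - spline_node n (w * x) i) *
                                     g w (cell_mean w f (spline_node n (w * x) i)))"
proof -
  define h where "h k = bspline n (w * x - real_of_int k) * g w (cell_mean w f k)" for k
  have "S_op n g w f x = infsum h UNIV"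
    unfolding S_op_def h_def cell_mean_def ..
  also have "\<dots> = infsum h (spline_node n (w * x) ` {..n})"
    by (rule infsum_cong_neutral) (auto simp: h_def bspline_eq_0_off_nodes[OF n])
  also have "\<dots> = sum h (spline_node n (w * x) ` {..n})"
    by simp
  also have "\<dots> = (\<Sum>i\<le>n. h (spline_node n (w * x) i))"
    by (subst sum.reindex) (auto simp: inj_on_def spline_node_def)
  finally show ?thesis
    unfolding h_def .
qed

section \<open>\<open>\<phi>\<close>-functions and Orlicz spaces\<close>

lemma phi_function_nonneg:
  assumes "phi_function \<phi>" "0 \<le> v"
  shows "0 \<le> \<phi> v"
  using assms mono_onD[of "{0..}" \<phi> 0 v] unfolding phi_function_def by simp

lemma phi_function_mono:
  assumes "phi_function \<phi>" "0 \<le> u" "u \<le> v"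
  shows "\<phi> u \<le> \<phi> v"
  using assms mono_onD[of "{0..}" \<phi> u v] unfolding phi_function_def by simp

lemma borel_measurable_phi_function_abs:
  assumes "phi_function \<phi>"
  shows "(\<lambda>v. \<phi> \<bar>v\<bar>) \<in> borel_measurable borel"
proof (rule borel_measurable_continuous_onI)
  have "continuous_on {0..} \<phi>" using assms unfolding phi_function_def by simp
  then show "continuous_on UNIV (\<lambda>v. \<phi> \<bar>v\<bar>)"
    by (rule continuous_on_compose2[OF _ continuous_on_rabs[OF continuous_on_id]]) auto
qed

lemma convex_on_scale_le:
  fixes \<phi> :: "real \<Rightarrow> real"
  assumes "convex_on {0..} \<phi>" "\<phi> 0 = 0" "0 \<le> s" "s \<le> 1" "0 \<le> v"
  shows "\<phi> (s * v) \<le> s * \<phi> v"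
  using convex_onD[OF assms(1), of s 0 v] assms by simp

lemma convex_on_ge_linear:
  fixes \<phi> :: "real \<Rightarrow> real"
  assumes "convex_on {0..} \<phi>" "\<phi> 0 = 0" "1 \<le> v"
  shows "v * \<phi> 1 \<le> \<phi> v"
  using convex_on_scale_le[OF assms(1,2), of "1 / v" v] assms(3) by (simp add: field_simps)

lemma convex_on_abs_comp:
  fixes \<eta> :: "real \<Rightarrow> real"
  assumes "convex_on {0..} \<eta>" "mono_on {0..} \<eta>"
  shows "convex_on UNIV (\<lambda>v. \<eta> \<bar>v\<bar>)"
proof (rule convex_onI)
  fix t x y :: real assume t: "0 < t" "t < 1"
  have "\<bar>(1 - t) * x + t * y\<bar> \<le> (1 - t) * \<bar>x\<bar> + t * \<bar>y\<bar>"
    using t by (intro order_trans[OF abs_triangle_ineq]) (simp add: abs_mult)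
  then have "\<eta> \<bar>(1 - t) * x + t * y\<bar> \<le> \<eta> ((1 - t) * \<bar>x\<bar> + t * \<bar>y\<bar>)"
    using t by (intro mono_onD[OF assms(2)]) auto
  also have "\<dots> \<le> (1 - t) * \<eta> \<bar>x\<bar> + t * \<eta> \<bar>y\<bar>"
    using convex_onD[OF assms(1), of t "\<bar>x\<bar>" "\<bar>y\<bar>"] t by simp
  finally show "\<eta> \<bar>(1 - t) *\<^sub>R x + t *\<^sub>R y\<bar> \<le> (1 - t) * \<eta> \<bar>x\<bar> + t * \<eta> \<bar>y\<bar>"
    by simp
qed simp

lemma phi_function_abs_add_le:
  assumes "phi_function \<phi>" "convex_on {0..} \<phi>"
  shows "\<phi> \<bar>a + b\<bar> \<le> \<phi> (2 * \<bar>a\<bar>) / 2 + \<phi> (2 * \<bar>b\<bar>) / 2"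
proof -
  have "\<phi> \<bar>a + b\<bar> \<le> \<phi> ((1 - 1/2) *\<^sub>R (2 * \<bar>a\<bar>) + (1/2) *\<^sub>R (2 * \<bar>b\<bar>))"
    by (rule phi_function_mono[OF assms(1)]) auto
  also have "\<dots> \<le> (1 - 1/2) * \<phi> (2 * \<bar>a\<bar>) + (1/2) * \<phi> (2 * \<bar>b\<bar>)"
    by (rule convex_onD[OF assms(2)]) auto
  finally show ?thesis by simp
qed

lemma modular_lborel: "modular \<phi> F = (\<integral>\<^sup>+x. ennreal (\<phi> \<bar>F x\<bar>) \<partial>lborel)"
  unfolding modular_def nn_integral_completion ..

lemma modular_cong_AE:
  assumes "AE x in lborel. F x = G x"
  shows "modular \<phi> F = modular \<phi> G"
  unfolding modular_lborel using assms by (intro nn_integral_cong_AE) (auto elim!: eventually_mono)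

lemma orlicz_add_subset:
  assumes "phi_function \<eta>"
  shows "orlicz (\<lambda>u. \<phi> u + \<eta> u) \<subseteq> orlicz \<phi>"
proof
  fix f assume "f \<in> orlicz (\<lambda>u. \<phi> u + \<eta> u)"
  then obtain c where c: "c > 0" "modular (\<lambda>u. \<phi> u + \<eta> u) (\<lambda>x. c * f x) < \<infinity>"
    and f: "f \<in> borel_measurable lebesgue"
    unfolding orlicz_def by blast
  have "modular \<phi> (\<lambda>x. c * f x) \<le> modular (\<lambda>u. \<phi> u + \<eta> u) (\<lambda>x. c * f x)"
    unfolding modular_def
    by (intro nn_integral_mono ennreal_leI) (simp add: phi_function_nonneg[OF assms])
  with c f show "f \<in> orlicz \<phi>"
    unfolding orlicz_def by (auto intro: le_less_trans)
qed

lemma abs_le_phi_function_bound: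
  fixes \<phi> :: "real \<Rightarrow> real"
  assumes phi: "phi_function \<phi>" "convex_on {0..} \<phi>" and c: "c > 0"
  shows "\<bar>v\<bar> \<le> 1 / c + \<phi> \<bar>c * v\<bar> / (c * \<phi> 1)"
proof -
  have \<phi>0: "\<phi> 0 = 0" and \<phi>1: "\<phi> 1 > 0"
    using phi(1) unfolding phi_function_def by auto
  have "0 \<le> \<phi> \<bar>c * v\<bar>"
    using phi_function_nonneg[OF phi(1)] by simp
  show ?thesis
  proof (cases "\<bar>c * v\<bar> \<le> 1")
    case True
    then have "\<bar>v\<bar> \<le> 1 / c" using c by (simp add: abs_mult field_simps)
    with \<open>0 \<le> \<phi> \<bar>c * v\<bar>\<close> c \<phi>1 show ?thesis by (smt (verit) divide_nonneg_pos mult_pos_pos)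
  next
    case False
    then have "\<bar>c * v\<bar> * \<phi> 1 \<le> \<phi> \<bar>c * v\<bar>"
      using convex_on_ge_linear[OF phi(2) \<phi>0] by simp
    then have "\<bar>v\<bar> \<le> \<phi> \<bar>c * v\<bar> / (c * \<phi> 1)"
      using c \<phi>1 by (simp add: abs_mult field_simps)
    then show ?thesis using c by (smt (verit) divide_pos_pos)
  qed
qed

lemma set_integrable_if_modular_finite:
  fixes \<phi> F :: "real \<Rightarrow> real"
  assumes phi: "phi_function \<phi>" "convex_on {0..} \<phi>" and c: "c > 0"
    and F[measurable]: "F \<in> borel_measurable borel"
    and fin: "modular \<phi> (\<lambda>x. c * F x) < \<infinity>"
  shows "set_integrable lborel {a..b} F"
  unfolding set_integrable_def
proof (rule integrableI_bounded)
  show "(\<lambda>x. indicator {a..b} x *\<^sub>R F x) \<in> borel_measurable lborel" by measurable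
  have [measurable]: "(\<lambda>x. \<phi> \<bar>c * F x\<bar>) \<in> borel_measurable borel"
    using measurable_compose[OF _ borel_measurable_phi_function_abs[OF phi(1)], of "\<lambda>x. c * F x"]
    by simp
  have \<phi>1: "\<phi> 1 > 0" using phi(1) unfolding phi_function_def by auto
  have \<phi>_nonneg: "0 \<le> \<phi> \<bar>v\<bar>" for v using phi_function_nonneg[OF phi(1)] by simp
  note bound = abs_le_phi_function_bound[OF phi c]
  have "(\<integral>\<^sup>+x. ennreal (norm (indicator {a..b} x *\<^sub>R F x)) \<partial>lborel)
      \<le> (\<integral>\<^sup>+x. ennreal (1 / c) * indicator {a..b} x
                 + ennreal (1 / (c * \<phi> 1)) * ennreal (\<phi> \<bar>c * F x\<bar>) \<partial>lborel)"
  proof (rule nn_integral_mono)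
    fix x
    have "ennreal (norm (indicator {a..b} x *\<^sub>R F x))
        \<le> ennreal (1 / c * indicator {a..b} x + 1 / (c * \<phi> 1) * \<phi> \<bar>c * F x\<bar>)"
      using bound[of "F x"] \<phi>_nonneg[of "c * F x"] c \<phi>1
      by (intro ennreal_leI) (cases "x \<in> {a..b}"; simp)
    also have "\<dots> = ennreal (1 / c) * indicator {a..b} x + ennreal (1 / (c * \<phi> 1)) * ennreal (\<phi> \<bar>c * F x\<bar>)"
      using c \<phi>1 \<phi>_nonneg[of "c * F x"]
      by (cases "x \<in> {a..b}") (simp_all add: ennreal_plus ennreal_mult[symmetric])
    finally show "ennreal (norm (indicator {a..b} x *\<^sub>R F x))
        \<le> ennreal (1 / c) * indicator {a..b} x + ennreal (1 / (c * \<phi> 1)) * ennreal (\<phi> \<bar>c * F x\<bar>)" .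
  qed
  also have "\<dots> = ennreal (1 / c) * emeasure lborel {a..b} + ennreal (1 / (c * \<phi> 1)) * modular \<phi> (\<lambda>x. c * F x)"
    unfolding modular_lborel by (subst nn_integral_add) (auto simp: nn_integral_cmult)
  also have "\<dots> < \<infinity>"
    using fin by (simp add: ennreal_mult_less_top emeasure_lborel_Icc_eq)
  finally show "(\<integral>\<^sup>+x. ennreal (norm (indicator {a..b} x *\<^sub>R F x)) \<partial>lborel) < \<infinity>" .
qed

lemma orlicz_locally_integrable_representative:
  assumes phi: "phi_function \<phi>" "convex_on {0..} \<phi>" and f: "f \<in> orlicz \<phi>"
  obtains f' where "f' \<in> borel_measurable borel" "AE x in lborel. f x = f' x"
    "\<And>a b. set_integrable lborel {a..b} f'"
proof -
  obtain c where c: "c > 0" "modular \<phi> (\<lambda>x. c * f x) < \<infinity>"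
    and f_meas: "f \<in> borel_measurable lebesgue"
    using f unfolding orlicz_def by blast
  obtain f' where f': "f' \<in> borel_measurable lborel" and ae: "AE x in lborel. f x = f' x"
    using completion_ex_borel_measurable_real[OF f_meas] by blast
  have "modular \<phi> (\<lambda>x. c * f' x) < \<infinity>"
    using c(2) modular_cong_AE[of "\<lambda>x. c * f x" "\<lambda>x. c * f' x" \<phi>] ae
    by (auto elim!: eventually_mono)
  with f' ae show ?thesis
    by (intro that set_integrable_if_modular_finite[OF phi c(1)]) auto
qed

lemma AE_lborel_translate:
  fixes t :: real
  assumes "AE x in lborel. P x"
  shows "AE x in lborel. P (x + t)"
proof -
  have "AE x in distr lborel borel ((+) t). P x"
    by (subst lborel_distr_plus) (rule assms)
  then have "AE x in lborel. P (t + x)"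
    by (rule AE_distrD[rotated]) simp
  then show ?thesis
    by (simp add: add.commute)
qed

lemma modulus_cong_AE:
  assumes "AE x in lborel. f x = f' x"
  shows "modulus \<eta> l f \<delta> = modulus \<eta> l f' \<delta>"
  unfolding modulus_def
proof (intro SUP_cong refl modular_cong_AE)
  fix t
  show "AE x in lborel. l * (f (x + t) - f x) = l * (f' (x + t) - f' x)"
    using assms AE_lborel_translate[OF assms, of t] by eventually_elim simp
qed

lemma S_op_cong_AE:
  assumes f: "f \<in> borel_measurable lebesgue" and f': "f' \<in> borel_measurable lebesgue"
    and ae: "AE x in lborel. f x = f' x"
  shows "S_op n g w f = S_op n g w f'"
proof -
  have "(LINT u:A|lebesgue. f u) = (LINT u:A|lebesgue. f' u)" if "A \<in> sets borel" for A
    unfolding set_lebesgue_integral_def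
  proof (rule integral_cong_AE)
    have "(indicator A :: real \<Rightarrow> real) \<in> borel_measurable lebesgue"
      using that by (intro borel_measurable_indicator) (simp add: sets_completionI_sets)
    then show "(\<lambda>u. indicator A u *\<^sub>R f u) \<in> borel_measurable lebesgue"
      "(\<lambda>u. indicator A u *\<^sub>R f' u) \<in> borel_measurable lebesgue"
      using f f' by (auto intro: borel_measurable_scaleR)
    show "AE x in lebesgue. indicator A x *\<^sub>R f x = indicator A x *\<^sub>R f' x"
      using AE_completion[OF ae] by (auto elim!: eventually_mono)
  qed
  then show ?thesis
    unfolding S_op_def by (intro ext) simp
qed

section \<open>Jensen's inequality for interval averages\<close>

lemma jensen_interval_average:
  fixes F q :: "real \<Rightarrow> real"
  assumes ab: "a < b" and [measurable]: "F \<in> borel_measurable borel" "q \<in> borel_measurable borel"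
    and F: "set_integrable lborel {a..b} F" and qF: "set_integrable lborel {a..b} (\<lambda>u. q (F u))"
    and q: "convex_on UNIV q"
  shows "q ((LINT u:{a..b}|lborel. F u) / (b - a)) \<le> (LINT u:{a..b}|lborel. q (F u)) / (b - a)"
proof -
  define d where "d u = indicator {a..b} u / (b - a)" for u :: real
  have d_nonneg: "0 \<le> d u" for u
    using ab by (simp add: d_def)
  define P where "P = density lborel (\<lambda>u. ennreal (d u))"
  have "emeasure P (space P) = (\<integral>\<^sup>+u. ennreal (1 / (b - a)) * indicator {a..b} u \<partial>lborel)"
    unfolding P_def by (subst emeasure_density) (auto intro!: nn_integral_cong simp: d_def indicator_def)
  also have "\<dots> = 1"
    using ab by (subst nn_integral_cmult_indicator) (simp_all add: ennreal_mult[symmetric])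
  finally interpret P: prob_space P
    by (rule prob_spaceI)
  have average: "integrable P G \<and> P.expectation G = (LINT u:{a..b}|lborel. G u) / (b - a)"
    if [measurable]: "G \<in> borel_measurable borel" and G: "set_integrable lborel {a..b} G" for G
  proof -
    have "(\<lambda>u. d u *\<^sub>R G u) = (\<lambda>u. (1 / (b - a)) * (indicator {a..b} u *\<^sub>R G u))"
      by (simp add: d_def fun_eq_iff)
    moreover have "integrable lborel (\<lambda>u. (1 / (b - a)) * (indicator {a..b} u *\<^sub>R G u))"
      using G unfolding set_integrable_def by (rule integrable_mult_right)
    ultimately show ?thesis
      unfolding P_def set_lebesgue_integral_def using d_nonneg
      by (simp add: integrable_density integral_density d_def)
  qed
  show ?thesis
    using P.jensens_inequality[of F UNIV 0 0 q] average[OF _ F] average[OF _ qF] q by simp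
qed

lemma jensen_interval_average_nn:
  fixes F q :: "real \<Rightarrow> real"
  assumes ab: "a < b" and [measurable]: "F \<in> borel_measurable borel" "q \<in> borel_measurable borel"
    and F: "set_integrable lborel {a..b} F" and q: "convex_on UNIV q" "\<And>v. 0 \<le> q v"
  shows "ennreal (q ((LINT u:{a..b}|lborel. F u) / (b - a)))
     \<le> ennreal (1 / (b - a)) * (\<integral>\<^sup>+u. indicator {a..b} u * ennreal (q (F u)) \<partial>lborel)"
proof (cases "(\<integral>\<^sup>+u. indicator {a..b} u * ennreal (q (F u)) \<partial>lborel) = \<infinity>")
  case True
  then show ?thesis using ab by (simp add: ennreal_mult_top)
next
  case False
  have ind: "indicator {a..b} u * ennreal (q (F u)) = ennreal (indicator {a..b} u *\<^sub>R q (F u))" for u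
    by (simp add: indicator_def)
  have qF: "set_integrable lborel {a..b} (\<lambda>u. q (F u))"
    unfolding set_integrable_def
    using False q(2) by (intro integrableI_nonneg) (auto simp: ind top.not_eq_extremum)
  have "ennreal (q ((LINT u:{a..b}|lborel. F u) / (b - a)))
      \<le> ennreal ((LINT u:{a..b}|lborel. q (F u)) / (b - a))"
    by (intro ennreal_leI jensen_interval_average[OF ab _ _ F qF q(1)]) simp_all
  also have "\<dots> = ennreal (1 / (b - a)) * ennreal (LINT u:{a..b}|lborel. q (F u))"
    using ab by (simp add: ennreal_mult'[symmetric])
  also have "ennreal (LINT u:{a..b}|lborel. q (F u)) = (\<integral>\<^sup>+u. indicator {a..b} u * ennreal (q (F u)) \<partial>lborel)"
    using qF q(2) unfolding set_integrable_def set_lebesgue_integral_def ind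
    by (subst nn_integral_eq_integral) auto
  finally show ?thesis .
qed

section \<open>Error estimates for the sampling operator\<close>

lemma S_op_minus_eq:
  assumes n: "n \<ge> 1"
  shows "S_op n g w f x - y
    = (\<Sum>i\<le>n. bspline n (w * x - spline_node n (w * x) i) *
               (g w (cell_mean w f (spline_node n (w * x) i)) - g w y)) + (g w y - y)"
  using sum_bspline_nodes[OF n, of "w * x"]
  by (simp add: S_op_eq_sum_nodes[OF n] right_diff_distrib sum_subtractf flip: sum_distrib_right)

lemma phi_combination_le:
  fixes c a :: "nat \<Rightarrow> real" and G :: "real \<Rightarrow> real"
  assumes phi: "phi_function \<phi>" "convex_on {0..} \<phi>" and eta: "phi_function \<eta>" "convex_on {0..} \<eta>"
    and psi: "phi_function \<psi>" and G: "\<forall>u v. \<bar>G u - G v\<bar> \<le> \<psi> \<bar>u - v\<bar>"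
    and H: "\<forall>u\<ge>0. \<phi> (C * \<psi> u) \<le> \<eta> (\<kappa> * l * u)" and \<kappa>: "0 \<le> \<kappa>" "\<kappa> \<le> 1" and l: "0 \<le> l"
    and c: "\<And>i. \<bar>c i\<bar> \<le> B" and \<mu>: "0 \<le> \<mu>" "\<mu> * B * (real n + 1) \<le> C"
  shows "\<phi> (\<mu> * \<bar>\<Sum>i\<le>n. c i * (G (a i) - G b)\<bar>) \<le> \<kappa> / (real n + 1) * (\<Sum>i\<le>n. \<eta> (l * \<bar>a i - b\<bar>))"
proof -
  have \<psi>_nonneg: "0 \<le> \<psi> \<bar>v\<bar>" for v using phi_function_nonneg[OF psi] by simp
  have B: "0 \<le> B" using c[of 0] by linarith
  have \<eta>0: "\<eta> 0 = 0" using eta(1) unfolding phi_function_def by simp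
  have C: "0 \<le> C" using \<mu> B by (smt (verit) mult_nonneg_nonneg of_nat_0_le_iff)
  have "\<mu> * \<bar>\<Sum>i\<le>n. c i * (G (a i) - G b)\<bar> \<le> \<mu> * (\<Sum>i\<le>n. B * \<psi> \<bar>a i - b\<bar>)"
    using \<mu>(1) B c G \<psi>_nonneg
    by (intro mult_left_mono order_trans[OF sum_abs sum_mono]) (auto simp: abs_mult intro: mult_mono)
  also have "\<dots> = (\<Sum>i\<le>n. (1 / (real n + 1)) *\<^sub>R ((\<mu> * B * (real n + 1)) * \<psi> \<bar>a i - b\<bar>))"
    unfolding sum_distrib_left by (intro sum.cong refl) (simp add: field_simps)
  also have "\<dots> \<le> (\<Sum>i\<le>n. (1 / (real n + 1)) *\<^sub>R (C * \<psi> \<bar>a i - b\<bar>))"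
    using \<mu> \<psi>_nonneg unfolding real_scaleR_def
    by (intro sum_mono mult_left_mono mult_right_mono) auto
  finally have "\<phi> (\<mu> * \<bar>\<Sum>i\<le>n. c i * (G (a i) - G b)\<bar>)
      \<le> \<phi> (\<Sum>i\<le>n. (1 / (real n + 1)) *\<^sub>R (C * \<psi> \<bar>a i - b\<bar>))"
    using \<mu>(1) by (intro phi_function_mono[OF phi(1)]) auto
  also have "\<dots> \<le> (\<Sum>i\<le>n. (1 / (real n + 1)) * \<phi> (C * \<psi> \<bar>a i - b\<bar>))"
    using C \<psi>_nonneg by (intro convex_on_sum[OF _ _ phi(2)]) auto
  also have "\<dots> \<le> (\<Sum>i\<le>n. (1 / (real n + 1)) * (\<kappa> * \<eta> (l * \<bar>a i - b\<bar>)))"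
  proof (intro sum_mono mult_left_mono)
    fix i
    have "\<phi> (C * \<psi> \<bar>a i - b\<bar>) \<le> \<eta> (\<kappa> * (l * \<bar>a i - b\<bar>))"
      using H by (simp add: mult.assoc)
    also have "\<dots> \<le> \<kappa> * \<eta> (l * \<bar>a i - b\<bar>)"
      using \<kappa> l by (intro convex_on_scale_le[OF eta(2) \<eta>0]) auto
    finally show "\<phi> (C * \<psi> \<bar>a i - b\<bar>) \<le> \<kappa> * \<eta> (l * \<bar>a i - b\<bar>)" .
  qed simp
  finally show ?thesis
    by (simp add: sum_distrib_left mult_ac)
qed

lemma phi_deviation_le:
  fixes G :: "real \<Rightarrow> real"
  assumes phi: "phi_function \<phi>" "convex_on {0..} \<phi>"
    and G: "G 0 = 0" "\<forall>u. u \<noteq> 0 \<longrightarrow> \<bar>G u / u - 1\<bar> \<le> C * r"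
    and C: "0 \<le> C" and r: "0 \<le> r" "r \<le> 1" and \<mu>: "0 \<le> \<mu>"
  shows "\<phi> (\<mu> * \<bar>G y - y\<bar>) \<le> r * \<phi> (\<mu> * C * \<bar>y\<bar>)"
proof -
  have "\<bar>G y - y\<bar> \<le> C * r * \<bar>y\<bar>"
  proof (cases "y = 0")
    case False
    then have "\<bar>G y - y\<bar> = \<bar>y\<bar> * \<bar>G y / y - 1\<bar>"
      by (simp add: abs_mult[symmetric] field_simps)
    also have "\<dots> \<le> \<bar>y\<bar> * (C * r)"
      using G(2) False by (intro mult_left_mono) auto
    finally show ?thesis by (simp add: mult_ac)
  qed (simp add: G(1))
  then have "\<mu> * \<bar>G y - y\<bar> \<le> r * (\<mu> * C * \<bar>y\<bar>)"
    using mult_left_mono[OF _ \<mu>] by (metis mult.assoc mult.left_commute)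
  then have "\<phi> (\<mu> * \<bar>G y - y\<bar>) \<le> \<phi> (r * (\<mu> * C * \<bar>y\<bar>))"
    using \<mu> by (intro phi_function_mono[OF phi(1)]) auto
  also have "\<dots> \<le> r * \<phi> (\<mu> * C * \<bar>y\<bar>)"
    using phi(1) r \<mu> C unfolding phi_function_def by (intro convex_on_scale_le[OF phi(2)]) auto
  finally show ?thesis .
qed

lemma eta_cell_mean_le:
  fixes f :: "real \<Rightarrow> real" and k :: int
  assumes eta: "phi_function \<eta>" "convex_on {0..} \<eta>" and f[measurable]: "f \<in> borel_measurable borel"
    and f_int: "set_integrable lborel {real_of_int k / w .. (real_of_int k + 1) / w} f"
    and w: "0 < w" and l: "0 \<le> l"
    and cell: "x - \<delta> \<le> real_of_int k / w" "(real_of_int k + 1) / w \<le> x + \<delta>"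
  shows "ennreal (\<eta> (l * \<bar>cell_mean w f k - f x\<bar>))
    \<le> ennreal w * (\<integral>\<^sup>+t. indicator {-\<delta>..\<delta>} t * ennreal (\<eta> \<bar>l * (f (x + t) - f x)\<bar>) \<partial>lborel)"
proof -
  define a b where "a = real_of_int k / w" and "b = (real_of_int k + 1) / w"
  have ab: "a < b" "b - a = 1 / w"
    unfolding a_def b_def using w by (simp_all add: divide_strict_right_mono flip: diff_divide_distrib)
  have [measurable]: "(\<lambda>v. \<eta> \<bar>v\<bar>) \<in> borel_measurable borel"
    by (rule borel_measurable_phi_function_abs[OF eta(1)])
  have const_int: "set_integrable lborel {a..b} (\<lambda>_. f x)"
    by (intro borel_integrable_atLeastAtMost' continuous_on_const)
  have F_int: "set_integrable lborel {a..b} (\<lambda>u. l * (f u - f x))"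
    using f_int const_int unfolding a_def b_def by auto
  have "cell_mean w f k = w * (LINT u:{a..b}|lborel. f u)"
    unfolding cell_mean_def a_def b_def set_lebesgue_integral_def by (subst integral_completion) auto
  then have mean: "(LINT u:{a..b}|lborel. l * (f u - f x)) / (b - a) = l * (cell_mean w f k - f x)"
    using f_int const_int ab unfolding a_def b_def
    by (simp add: set_integral_const right_diff_distrib field_simps)
  have "ennreal (\<eta> (l * \<bar>cell_mean w f k - f x\<bar>))
      = ennreal (\<eta> \<bar>(LINT u:{a..b}|lborel. l * (f u - f x)) / (b - a)\<bar>)"
    unfolding mean using l by (simp add: abs_mult)
  also have "\<dots> \<le> ennreal (1 / (b - a)) * (\<integral>\<^sup>+u. indicator {a..b} u * ennreal (\<eta> \<bar>l * (f u - f x)\<bar>) \<partial>lborel)"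
    using phi_function_nonneg[OF eta(1)]
    by (intro jensen_interval_average_nn[OF ab(1) _ _ F_int convex_on_abs_comp[OF eta(2)]])
       (use eta(1) in \<open>auto simp: phi_function_def\<close>)
  also have "\<dots> \<le> ennreal w * (\<integral>\<^sup>+u. indicator {x - \<delta>..x + \<delta>} u * ennreal (\<eta> \<bar>l * (f u - f x)\<bar>) \<partial>lborel)"
    using cell unfolding ab(2) a_def[symmetric] b_def[symmetric]
    by (intro mult_mono nn_integral_mono) (auto simp: indicator_def)
  also have "(\<integral>\<^sup>+u. indicator {x - \<delta>..x + \<delta>} u * ennreal (\<eta> \<bar>l * (f u - f x)\<bar>) \<partial>lborel)
      = (\<integral>\<^sup>+t. indicator {-\<delta>..\<delta>} t * ennreal (\<eta> \<bar>l * (f (x + t) - f x)\<bar>) \<partial>lborel)"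
    by (subst nn_integral_real_affine[where c=1 and t=x]) (auto intro!: nn_integral_cong simp: indicator_def)
  finally show ?thesis .
qed

lemma ennreal_le_sum_bound:
  fixes e :: "nat \<Rightarrow> real"
  assumes v: "v \<le> c * (\<Sum>i\<le>n. e i) + d" and c: "0 \<le> c" and d: "0 \<le> d" and e: "\<And>i. 0 \<le> e i"
    and J: "\<And>i. i \<le> n \<Longrightarrow> ennreal (e i) \<le> J"
  shows "ennreal v \<le> ennreal ((real n + 1) * c) * J + ennreal d"
proof -
  have "ennreal v \<le> ennreal c * (\<Sum>i\<le>n. ennreal (e i)) + ennreal d"
    using ennreal_leI[OF v] c d e by (simp add: ennreal_plus ennreal_mult sum_nonneg sum_ennreal)
  also have "\<dots> \<le> ennreal c * (\<Sum>i\<le>n. J) + ennreal d"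
    using J by (intro add_mono mult_left_mono sum_mono) auto
  finally show ?thesis
    using c by (simp add: ennreal_mult ennreal_of_nat_eq_real_of_nat mult_ac add.commute)
qed

lemma modulus_mono:
  assumes "\<delta> \<le> \<delta>'"
  shows "modulus \<eta> l f \<delta> \<le> modulus \<eta> l f \<delta>'"
  unfolding modulus_def using assms by (intro SUP_subset_mono) auto

lemma nn_integral_local_increments_le:
  fixes f :: "real \<Rightarrow> real"
  assumes eta: "phi_function \<eta>" and f[measurable]: "f \<in> borel_measurable borel" and \<delta>: "0 \<le> \<delta>"
  shows "(\<integral>\<^sup>+x. (\<integral>\<^sup>+t. indicator {-\<delta>..\<delta>} t * ennreal (\<eta> \<bar>l * (f (x + t) - f x)\<bar>) \<partial>lborel) \<partial>lborel)
    \<le> ennreal (2 * \<delta>) * modulus \<eta> l f \<delta>"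
proof -
  have [measurable]: "(\<lambda>v. \<eta> \<bar>v\<bar>) \<in> borel_measurable borel"
    by (rule borel_measurable_phi_function_abs[OF eta])
  have "(\<integral>\<^sup>+x. (\<integral>\<^sup>+t. indicator {-\<delta>..\<delta>} t * ennreal (\<eta> \<bar>l * (f (x + t) - f x)\<bar>) \<partial>lborel) \<partial>lborel)
      = (\<integral>\<^sup>+t. (\<integral>\<^sup>+x. indicator {-\<delta>..\<delta>} t * ennreal (\<eta> \<bar>l * (f (x + t) - f x)\<bar>) \<partial>lborel) \<partial>lborel)"
    by (rule lborel_pair.Fubini'[symmetric]) measurable
  also have "\<dots> = (\<integral>\<^sup>+t. indicator {-\<delta>..\<delta>} t * modular \<eta> (\<lambda>x. l * (f (x + t) - f x)) \<partial>lborel)"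
    unfolding modular_lborel by (intro nn_integral_cong nn_integral_cmult) measurable
  also have "\<dots> \<le> (\<integral>\<^sup>+t. modulus \<eta> l f \<delta> * indicator {-\<delta>..\<delta>} t \<partial>lborel)"
    unfolding modulus_def
    by (intro nn_integral_mono) (auto simp: indicator_def abs_le_iff intro!: SUP_upper)
  also have "\<dots> = ennreal (2 * \<delta>) * modulus \<eta> l f \<delta>"
    using \<delta> by (simp add: nn_integral_cmult_indicator mult.commute)
  finally show ?thesis .
qed

lemma ennreal_divide_3: "(X::ennreal) / 3 = ennreal (1 / 3) * X"
proof -
  have "inverse (3::ennreal) = ennreal (1 / 3)"
    using inverse_ennreal[of 3] by (simp add: ennreal_numeral[symmetric] del: ennreal_numeral)
  then show ?thesis
    by (simp add: divide_ennreal_def mult.commute)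
qed

lemma eventually_div_le_inverse_powr:
  fixes R \<alpha> :: real
  assumes \<alpha>: "\<alpha> < 1" and R: "0 < R"
  shows "\<forall>\<^sub>F w in at_top. R / w \<le> 1 / w powr \<alpha>"
proof (rule eventually_mono[OF eventually_ge_at_top[of "R powr (1 / (1 - \<alpha>))"]])
  fix w assume w: "R powr (1 / (1 - \<alpha>)) \<le> w"
  then have w0: "0 < w"
    using R by (smt (verit) powr_gt_zero)
  have "R = (R powr (1 / (1 - \<alpha>))) powr (1 - \<alpha>)"
    using R \<alpha> by (simp add: powr_powr)
  also have "\<dots> \<le> w powr (1 - \<alpha>)"
    using w \<alpha> by (intro powr_mono2) auto
  also have "\<dots> = w / w powr \<alpha>"
    using w0 by (simp add: powr_diff)
  finally show "R / w \<le> 1 / w powr \<alpha>"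
    using w0 by (simp add: field_simps)
qed

locale perturbed_kantorovich =
  fixes n :: nat and \<phi> \<eta> \<psi> :: "real \<Rightarrow> real" and g :: "real \<Rightarrow> real \<Rightarrow> real"
    and C \<theta> W Cl \<kappa> l \<mu> :: real
  assumes n: "n \<ge> 1"
    and phi: "phi_function \<phi>" "convex_on {0..} \<phi>" and eta: "phi_function \<eta>" "convex_on {0..} \<eta>"
    and psi: "phi_function \<psi>"
    and g_lip: "\<forall>w>0. \<forall>u v. \<bar>g w u - g w v\<bar> \<le> \<psi> \<bar>u - v\<bar>" and g_zero: "\<forall>w>0. g w 0 = 0"
    and g_rate: "\<forall>w\<ge>W. \<forall>u. u \<noteq> 0 \<longrightarrow> \<bar>g w u / u - 1\<bar> \<le> C * w powr - \<theta>"
    and W: "1 \<le> W" and C: "0 \<le> C" and \<theta>: "0 \<le> \<theta>"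
    and H: "\<forall>u\<ge>0. \<phi> (Cl * \<psi> u) \<le> \<eta> (\<kappa> * l * u)" and \<kappa>: "0 \<le> \<kappa>" "\<kappa> \<le> 1" and l: "0 \<le> l"
    and \<mu>: "0 \<le> \<mu>" "2 * \<mu> * (2 ^ n * real n ^ (n - 1)) * (real n + 1) \<le> Cl"
begin

lemma large_w:
  assumes "W \<le> w"
  shows "0 < w" "\<forall>u v. \<bar>g w u - g w v\<bar> \<le> \<psi> \<bar>u - v\<bar>" "g w 0 = 0"
    "\<forall>u. u \<noteq> 0 \<longrightarrow> \<bar>g w u / u - 1\<bar> \<le> C * w powr - \<theta>" "0 \<le> w powr - \<theta>" "w powr - \<theta> \<le> 1"
  using assms W g_lip g_zero g_rate powr_mono[of "- \<theta>" 0 w] \<theta> by simp_all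

lemma phi_S_op_error_le:
  assumes "W \<le> w"
  shows "\<phi> \<bar>\<mu> * (S_op n g w f x - f x)\<bar>
    \<le> \<kappa> / (2 * (real n + 1)) * (\<Sum>i\<le>n. \<eta> (l * \<bar>cell_mean w f (spline_node n (w * x) i) - f x\<bar>))
      + w powr - \<theta> / 3 * \<phi> (3 * \<mu> * C * \<bar>f x\<bar>)"
proof -
  note w = large_w[OF assms]
  define k where "k = spline_node n (w * x)"
  define T where "T = (\<Sum>i\<le>n. bspline n (w * x - k i) * (g w (cell_mean w f (k i)) - g w (f x)))"
  have "\<phi> \<bar>\<mu> * (S_op n g w f x - f x)\<bar> = \<phi> \<bar>\<mu> * T + \<mu> * (g w (f x) - f x)\<bar>"
    unfolding S_op_minus_eq[OF n, of g w f x "f x"] T_def k_def by (simp add: distrib_left)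
  also have "\<dots> \<le> \<phi> (2 * \<mu> * \<bar>T\<bar>) / 2 + \<phi> (2 * \<mu> * \<bar>g w (f x) - f x\<bar>) / 2"
    using phi_function_abs_add_le[OF phi, of "\<mu> * T" "\<mu> * (g w (f x) - f x)"] \<mu>(1)
    by (simp add: abs_mult mult.assoc)
  also have "\<phi> (2 * \<mu> * \<bar>T\<bar>) / 2
      \<le> \<kappa> / (2 * (real n + 1)) * (\<Sum>i\<le>n. \<eta> (l * \<bar>cell_mean w f (k i) - f x\<bar>))"
  proof -
    have "\<phi> (2 * \<mu> * \<bar>T\<bar>) \<le> \<kappa> / (real n + 1) * (\<Sum>i\<le>n. \<eta> (l * \<bar>cell_mean w f (k i) - f x\<bar>))"
      unfolding T_def using \<mu>
      by (intro phi_combination_le[OF phi eta psi w(2) H \<kappa> l abs_bspline_le[OF n]]) (auto simp: mult_ac)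
    then show ?thesis by (simp add: field_simps)
  qed
  also have "\<phi> (2 * \<mu> * \<bar>g w (f x) - f x\<bar>) / 2 \<le> w powr - \<theta> / 3 * \<phi> (3 * \<mu> * C * \<bar>f x\<bar>)"
  proof -
    have "\<phi> (2 * \<mu> * \<bar>g w (f x) - f x\<bar>) \<le> w powr - \<theta> * \<phi> (2 * \<mu> * C * \<bar>f x\<bar>)"
      using \<mu>(1) by (intro phi_deviation_le[OF phi w(3,4) C w(5,6)]) simp
    moreover have "\<phi> (2 * \<mu> * C * \<bar>f x\<bar>) \<le> 2 / 3 * \<phi> (3 * \<mu> * C * \<bar>f x\<bar>)"
      using convex_on_scale_le[OF phi(2), of "2 / 3" "3 * \<mu> * C * \<bar>f x\<bar>"] phi(1) \<mu>(1) C
      unfolding phi_function_def by (simp add: mult_ac)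
    ultimately have "\<phi> (2 * \<mu> * \<bar>g w (f x) - f x\<bar>) \<le> w powr - \<theta> * (2 / 3 * \<phi> (3 * \<mu> * C * \<bar>f x\<bar>))"
      using mult_left_mono[OF _ w(5)] by (meson order_trans)
    then show ?thesis
      by (simp add: field_simps)
  qed
  finally show ?thesis
    by (simp add: k_def)
qed

lemma ennreal_phi_S_op_error_le:
  fixes f :: "real \<Rightarrow> real"
  assumes f[measurable]: "f \<in> borel_measurable borel" and f_int: "\<And>a b. set_integrable lborel {a..b} f"
    and wW: "W \<le> w"
  defines "R \<equiv> real n / 2 + 2"
  shows "ennreal (\<phi> \<bar>\<mu> * (S_op n g w f x - f x)\<bar>)
    \<le> ennreal (\<kappa> / 2 * w) * (\<integral>\<^sup>+t. indicator {-(R / w)..R / w} t * ennreal (\<eta> \<bar>l * (f (x + t) - f x)\<bar>) \<partial>lborel)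
      + ennreal (w powr - \<theta> / 3) * ennreal (\<phi> \<bar>3 * \<mu> * C * f x\<bar>)"
    (is "_ \<le> _ * ?J + _")
proof -
  note w = large_w(1)[OF wW] and r = large_w(5,6)[OF wW]
  have cell: "ennreal (\<eta> (l * \<bar>cell_mean w f (spline_node n (w * x) i) - f x\<bar>)) \<le> ennreal w * ?J"
    if "i \<le> n" for i
  proof (rule eta_cell_mean_le[OF eta f f_int w l])
    have "(w * x - R) / w \<le> real_of_int (spline_node n (w * x) i) / w"
      using spline_node_ge[of "w * x" n i] w by (intro divide_right_mono) (auto simp: R_def)
    then show "x - R / w \<le> real_of_int (spline_node n (w * x) i) / w"
      using w by (simp add: diff_divide_distrib)
    have "(real_of_int (spline_node n (w * x) i) + 1) / w \<le> (w * x + R) / w"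
      using spline_node_le[OF that, of "w * x"] w by (intro divide_right_mono) (auto simp: R_def)
    then show "(real_of_int (spline_node n (w * x) i) + 1) / w \<le> x + R / w"
      using w by (simp add: add_divide_distrib)
  qed
  have "ennreal (\<phi> \<bar>\<mu> * (S_op n g w f x - f x)\<bar>)
      \<le> ennreal ((real n + 1) * (\<kappa> / (2 * (real n + 1)))) * (ennreal w * ?J)
        + ennreal (w powr - \<theta> / 3 * \<phi> (3 * \<mu> * C * \<bar>f x\<bar>))"
    using phi_function_nonneg[OF eta(1)] phi_function_nonneg[OF phi(1)] l \<kappa>(1) r(1) \<mu>(1) C
    by (intro ennreal_le_sum_bound[OF phi_S_op_error_le[OF wW]] cell) auto
  also have "(real n + 1) * (\<kappa> / (2 * (real n + 1))) = \<kappa> / 2"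
    by (simp add: field_simps)
  also have "ennreal (\<kappa> / 2) * (ennreal w * ?J) = ennreal (\<kappa> / 2 * w) * ?J"
    using w \<kappa>(1) by (subst ennreal_mult) (simp_all add: mult.assoc)
  also have "ennreal (w powr - \<theta> / 3 * \<phi> (3 * \<mu> * C * \<bar>f x\<bar>)) = ennreal (w powr - \<theta> / 3) * ennreal (\<phi> \<bar>3 * \<mu> * C * f x\<bar>)"
  proof -
    have "\<bar>3 * \<mu> * C * f x\<bar> = 3 * \<mu> * C * \<bar>f x\<bar>"
      using \<mu>(1) C by (simp add: abs_mult)
    then show ?thesis
      using r(1) \<mu>(1) C phi_function_nonneg[OF phi(1)] by (simp only:) (rule ennreal_mult; simp)
  qed
  finally show ?thesis .
qed

lemma modular_S_op_error_le_borel: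
  fixes f :: "real \<Rightarrow> real"
  assumes f[measurable]: "f \<in> borel_measurable borel" and f_int: "\<And>a b. set_integrable lborel {a..b} f"
    and wW: "W \<le> w"
  defines "R \<equiv> real n / 2 + 2"
  shows "modular \<phi> (\<lambda>x. \<mu> * (S_op n g w f x - f x))
    \<le> ennreal (\<kappa> * R) * modulus \<eta> l f (R / w) + ennreal (w powr - \<theta> / 3) * modular \<phi> (\<lambda>x. 3 * \<mu> * C * f x)"
proof -
  note w = large_w(1)[OF wW]
  define J where "J x = (\<integral>\<^sup>+t. indicator {-(R / w)..R / w} t * ennreal (\<eta> \<bar>l * (f (x + t) - f x)\<bar>) \<partial>lborel)"
    for x
  have [measurable]: "(\<lambda>v. \<phi> \<bar>v\<bar>) \<in> borel_measurable borel" "(\<lambda>v. \<eta> \<bar>v\<bar>) \<in> borel_measurable borel"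
    using borel_measurable_phi_function_abs phi(1) eta(1) by blast+
  have "modular \<phi> (\<lambda>x. \<mu> * (S_op n g w f x - f x))
      \<le> (\<integral>\<^sup>+x. ennreal (\<kappa> / 2 * w) * J x + ennreal (w powr - \<theta> / 3) * ennreal (\<phi> \<bar>3 * \<mu> * C * f x\<bar>) \<partial>lborel)"
    unfolding modular_lborel J_def R_def
    by (rule nn_integral_mono) (rule ennreal_phi_S_op_error_le[OF f f_int wW])
  also have "\<dots> = ennreal (\<kappa> / 2 * w) * (\<integral>\<^sup>+x. J x \<partial>lborel) + ennreal (w powr - \<theta> / 3) * modular \<phi> (\<lambda>x. 3 * \<mu> * C * f x)"
    unfolding modular_lborel J_def by (subst nn_integral_add) (auto simp: nn_integral_cmult)
  also have "\<dots> \<le> ennreal (\<kappa> / 2 * w) * (ennreal (2 * (R / w)) * modulus \<eta> l f (R / w))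
      + ennreal (w powr - \<theta> / 3) * modular \<phi> (\<lambda>x. 3 * \<mu> * C * f x)"
    unfolding J_def using w
    by (intro add_mono mult_left_mono nn_integral_local_increments_le[OF eta(1) f]) (auto simp: R_def)
  also have "ennreal (\<kappa> / 2 * w) * (ennreal (2 * (R / w)) * modulus \<eta> l f (R / w))
      = ennreal (\<kappa> * R) * modulus \<eta> l f (R / w)"
  proof -
    have "ennreal (\<kappa> / 2 * w) * ennreal (2 * (R / w)) = ennreal (\<kappa> / 2 * w * (2 * (R / w)))"
      using w \<kappa>(1) by (intro ennreal_mult[symmetric]) (auto simp: R_def)
    also have "\<kappa> / 2 * w * (2 * (R / w)) = \<kappa> * R"
      using w by (simp add: field_simps)
    finally show ?thesis
      by (metis mult.assoc)
  qed
  finally show ?thesis .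
qed

lemma modular_S_op_error_le:
  assumes f: "f \<in> orlicz \<phi>" and wW: "W \<le> w"
  defines "R \<equiv> real n / 2 + 2"
  shows "modular \<phi> (\<lambda>x. \<mu> * (S_op n g w f x - f x))
    \<le> ennreal (\<kappa> * R) * modulus \<eta> l f (R / w) + modular \<phi> (\<lambda>x. 3 * \<mu> * C * f x) / 3 * ennreal (w powr - \<theta>)"
proof -
  note r = large_w(5)[OF wW]
  obtain f' where f'[measurable]: "f' \<in> borel_measurable borel" and ae: "AE x in lborel. f x = f' x"
    and f'_int: "\<And>a b. set_integrable lborel {a..b} f'"
    using orlicz_locally_integrable_representative[OF phi f] by blast
  have meas: "f \<in> borel_measurable lebesgue" "f' \<in> borel_measurable lebesgue"
    using f unfolding orlicz_def by (auto intro: measurable_completion)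
  have "AE x in lborel. \<mu> * (S_op n g w f' x - f' x) = \<mu> * (S_op n g w f x - f x)"
    using ae by eventually_elim (simp add: S_op_cong_AE[OF meas ae])
  then have "modular \<phi> (\<lambda>x. \<mu> * (S_op n g w f x - f x)) = modular \<phi> (\<lambda>x. \<mu> * (S_op n g w f' x - f' x))"
    by (rule modular_cong_AE[symmetric])
  also have "\<dots> \<le> ennreal (\<kappa> * R) * modulus \<eta> l f' (R / w) + ennreal (w powr - \<theta> / 3) * modular \<phi> (\<lambda>x. 3 * \<mu> * C * f' x)"
    unfolding R_def by (rule modular_S_op_error_le_borel[OF f' f'_int wW])
  also have "modulus \<eta> l f' (R / w) = modulus \<eta> l f (R / w)"
    by (rule modulus_cong_AE[OF ae, symmetric])
  also have "AE x in lborel. 3 * \<mu> * C * f' x = 3 * \<mu> * C * f x"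
    using ae by eventually_elim simp
  then have "modular \<phi> (\<lambda>x. 3 * \<mu> * C * f' x) = modular \<phi> (\<lambda>x. 3 * \<mu> * C * f x)"
    by (rule modular_cong_AE)
  also have "ennreal (w powr - \<theta> / 3) = ennreal (w powr - \<theta>) * ennreal (1 / 3)"
    using r by (subst ennreal_mult[symmetric]) auto
  finally show ?thesis
    by (simp add: ennreal_divide_3 mult_ac)
qed

lemma eventually_modular_S_op_error_le:
  assumes f: "f \<in> orlicz \<phi>" and \<alpha>: "\<alpha> < 1"
  defines "R \<equiv> real n / 2 + 2"
  shows "\<forall>\<^sub>F w in at_top. modular \<phi> (\<lambda>x. \<mu> * (S_op n g w f x - f x))
    \<le> ennreal (\<kappa> * R) * modulus \<eta> l f (1 / w powr \<alpha>)
      + modular \<phi> (\<lambda>x. 3 * \<mu> * C * f x) / 3 * ennreal (w powr - \<theta>)"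
proof -
  have "0 < R"
    unfolding R_def by simp
  with \<alpha> have "\<forall>\<^sub>F w in at_top. R / w \<le> 1 / w powr \<alpha>"
    by (rule eventually_div_le_inverse_powr)
  with eventually_ge_at_top[of W] show ?thesis
  proof eventually_elim
    case (elim w)
    have "ennreal (\<kappa> * R) * modulus \<eta> l f (R / w) \<le> ennreal (\<kappa> * R) * modulus \<eta> l f (1 / w powr \<alpha>)"
      using modulus_mono[OF elim(2)] by (rule mult_left_mono) simp
    with modular_S_op_error_le[OF f elim(1)] show ?case
      unfolding R_def using add_right_mono order_trans by blast
  qed
qed

end

theorem corollary4p2:
  fixes n :: nat and g :: "real \<Rightarrow> real \<Rightarrow> real" and \<psi> \<phi> \<eta> :: "real \<Rightarrow> real"
    and \<theta>\<^sub>0 :: real and f :: "real \<Rightarrow> real"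
  assumes n: "n \<ge> 1"
    and g_unif: "\<forall>\<epsilon>>0. \<exists>W. \<forall>w\<ge>W. \<forall>u. \<bar>g w u - u\<bar> < \<epsilon>"
    and g_zero: "\<forall>w>0. g w 0 = 0"
    and psi: "phi_function \<psi>"
    and g_lip: "\<forall>w>0. \<forall>u v. \<bar>g w u - g w v\<bar> \<le> \<psi> \<bar>u - v\<bar>"
    and theta: "\<theta>\<^sub>0 > 0"
    and g_rate: "\<exists>C W. \<forall>w\<ge>W. \<forall>u. u \<noteq> 0 \<longrightarrow> \<bar>g w u / u - 1\<bar> \<le> C * w powr (- \<theta>\<^sub>0)"
    and phi: "phi_function \<phi>" "convex_on {0..} \<phi>"
    and eta: "phi_function \<eta>" "convex_on {0..} \<eta>"
    and H: "condH \<phi> \<psi> \<eta>"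
    and f: "f \<in> orlicz (\<lambda>u. \<phi> u + \<eta> u)"
  shows "\<forall>\<alpha>. 0 < \<alpha> \<and> \<alpha> < 1 \<longrightarrow>
    (\<exists>\<mu>>0. \<exists>c\<^sub>0>0. \<exists>l>0. \<forall>\<^sub>F w in at_top.
       modular \<phi> (\<lambda>x. \<mu> * (S_op n g w f x - f x))
       \<le> modulus \<eta> l f (1 / w powr \<alpha>) / 3 + modulus \<eta> l f (1 / w) / 3
          + modular \<phi> (\<lambda>x. c\<^sub>0 * f x) / 3 * ennreal (w powr (- \<theta>\<^sub>0)))"
proof (intro allI impI)
  fix \<alpha> :: real assume \<alpha>: "0 < \<alpha> \<and> \<alpha> < 1"
  have f_\<phi>: "f \<in> orlicz \<phi>"
    using f orlicz_add_subset[OF eta(1)] by blast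
  obtain C W where rate: "\<forall>w\<ge>W. \<forall>u. u \<noteq> 0 \<longrightarrow> \<bar>g w u / u - 1\<bar> \<le> C * w powr (- \<theta>\<^sub>0)"
    using g_rate by blast
  have rate': "\<forall>w\<ge>max W 1. \<forall>u. u \<noteq> 0 \<longrightarrow> \<bar>g w u / u - 1\<bar> \<le> max C 1 * w powr (- \<theta>\<^sub>0)"
    using rate by (meson max.boundedE max.cobounded1 mult_right_mono order_trans powr_ge_zero)
  define R where "R = real n / 2 + 2"
  have R: "0 < R" "0 < 1 / (3 * R)" "1 / (3 * R) < 1"
    unfolding R_def by (simp_all add: field_simps)
  then obtain Cl where Cl: "0 < Cl" "\<forall>u\<ge>0. \<phi> (Cl * \<psi> u) \<le> \<eta> (1 / (3 * R) * u)"
    using H unfolding condH_def by blast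
  define \<mu> where "\<mu> = Cl / (2 * (2 ^ n * real n ^ (n - 1)) * (real n + 1))"
  have \<mu>: "0 < \<mu>" "2 * \<mu> * (2 ^ n * real n ^ (n - 1)) * (real n + 1) \<le> Cl"
    unfolding \<mu>_def using Cl(1) n by simp_all
  interpret K: perturbed_kantorovich n \<phi> \<eta> \<psi> g "max C 1" \<theta>\<^sub>0 "max W 1" Cl "1 / (3 * R)" 1 \<mu>
    using n phi eta psi g_lip g_zero rate' theta Cl(2) R \<mu> by unfold_locales auto
  have "\<forall>\<^sub>F w in at_top. modular \<phi> (\<lambda>x. \<mu> * (S_op n g w f x - f x))
      \<le> modulus \<eta> 1 f (1 / w powr \<alpha>) / 3
        + modular \<phi> (\<lambda>x. (3 * \<mu> * max C 1) * f x) / 3 * ennreal (w powr (- \<theta>\<^sub>0))"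
    using K.eventually_modular_S_op_error_le[OF f_\<phi> conjunct2[OF \<alpha>], folded R_def] R(1)
    by (simp add: ennreal_divide_3)
  then have "\<forall>\<^sub>F w in at_top. modular \<phi> (\<lambda>x. \<mu> * (S_op n g w f x - f x))
      \<le> modulus \<eta> 1 f (1 / w powr \<alpha>) / 3 + modulus \<eta> 1 f (1 / w) / 3
        + modular \<phi> (\<lambda>x. (3 * \<mu> * max C 1) * f x) / 3 * ennreal (w powr (- \<theta>\<^sub>0))"
  proof eventually_elim
    case (elim w)
    then show ?case
      using add_right_mono[OF add_increasing2[OF zero_le]] order_trans by blast
  qed
  moreover have "0 < 3 * \<mu> * max C 1"
    using \<mu>(1) by simp
  ultimately show "\<exists>\<mu>>0. \<exists>c\<^sub>0>0. \<exists>l>0. \<forall>\<^sub>F w in at_top.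
       modular \<phi> (\<lambda>x. \<mu> * (S_op n g w f x - f x))
       \<le> modulus \<eta> l f (1 / w powr \<alpha>) / 3 + modulus \<eta> l f (1 / w) / 3
          + modular \<phi> (\<lambda>x. c\<^sub>0 * f x) / 3 * ennreal (w powr (- \<theta>\<^sub>0))"
    using \<mu>(1) zero_less_one by blast
qed

end
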